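(* Let $M$ be a gasket automaton satisfying the $\gamma$-isolated condition with $\mathcal P_{\alpha\gamma}\cup\mathcal P_{\beta\gamma}\ne\emptyset$, and let $M'$ be a one-step simplification of $M$. Then $M'$ is a gasket automaton satisfying the $\gamma$-isolated condition.
   Context: $\Sigma=\{1,\dots,N\}$. Triangle automaton: $\alpha,\beta,\gamma$ distinct elements of $\Sigma\cup\{-1,-2,-3\}$; states $S_{uv}$ ($u\ne v\in\{\alpha,\beta,\gamma\}$), $Id$, $Exit$; input alphabet $\Sigma^2$; transition $\delta$ with $\delta(Id,(i,j))=Id$ iff $i=j$; $\delta(Id,(i,j))=S_{uv}\Rightarrow\delta(Id,(j,i))=S_{vu}$; $\delta(S_{uv},(i,j))=S_{uv}$ if $(i,j)=(v,u)$, else $Exit$. $\mathcal P_{uv}=\{(i,j):\delta(Id,(i,j))=S_{uv}\}$; a triangle automaton is determined by $\mathcal P_{\alpha\beta},\mathcal P_{\alpha\gamma},\mathcal P_{\beta\gamma}$. $i\triangleleft_{uv}j$ iff $(i,j)\in\mathcal P_{uv}$ (iff $j\triangleleft_{vu}i$); $j$ is $uv$-minimal if no $i\triangleleft_{uv}j$, $uv$-maximal if no $j\triangleleft_{uv}k$, $uv$-isolated if both. Gasket automaton: (Uniqueness) $i\triangleleft_{uv}j,i\triangleleft_{uv}j'\Rightarrow j=j'$; (Gathering) any two of $a\triangleleft_{\alpha\gamma}c$, $a\triangleleft_{\beta\gamma}b$, $b\triangleleft_{\alpha\beta}c$ imply the third; (Boundary) if $\alpha\in\Sigma$ it is $\alpha\gamma$-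 and $\alpha\beta$-minimal; if $\beta\in\Sigma$ it is $\beta\gamma$- and $\beta\alpha$-minimal; if $\gamma\in\Sigma$ it is $\gamma\alpha$- and $\gamma\beta$-minimal. $\gamma$-isolated condition: $\alpha,\beta,\gamma\in\Sigma$; $(\Sigma,\mathcal P_{\alpha\gamma}\cup\mathcal P_{\beta\gamma})$ has no directed cycle; $\gamma$ is $\alpha\gamma$-, $\beta\gamma$- and $\alpha\beta$-isolated. One-step simplification: $b$ is double-maximal if $\alpha\gamma$- and $\beta\gamma$-maximal. Choose $(\tau,\kappa)\in\mathcal P_{\alpha\gamma}\cup\mathcal P_{\beta\gamma}$ with $\kappa$ double-maximal. If $(\tau,\kappa)\in\mathcal P_{\alpha\gamma}$: if $\kappa$ has no $\alpha\beta$-predecessor, $\mathcal P'_{\alpha\beta}=\mathcal P_{\alpha\beta}$, $\mathcal P'_{\alpha\gamma}=\mathcal P_{\alpha\gamma}\setminus\{(\tau,\kappa)\}$, $\mathcal P'_{\beta\gamma}=\mathcal P_{\beta\gamma}$; if $\lambda\triangleleft_{\alpha\beta}\kappa$, then $\mathcal P'_{\alpha\beta}=\mathcal P_{\alpha\beta}$, $\mathcal P'_{\alpha\gamma}=\mathcal P_{\alpha\gamma}\setminus\{(\tau,\kappa)\}$, $\mathcal P'_{\beta\gamma}=\mathcal P_{\beta\gamma}\setminus\{(\tau,\lambda)\}$. If $(\tau,\kappa)\in\mathcal P_{\beta\gamma}$, the same with the roles of $\alpha$ and $\beta$ interchanged. $M'$ is the triangle automaton determined by $\mathcal P'_{\alpha\beta},\mathcal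 P'_{\alpha\gamma},\mathcal P'_{\beta\gamma}$. *)

theory Defs
  imports Main
begin

text \<open>A triangle automaton is determined by the three
  relations Pab = P_{alpha beta}, Pac = P_{alpha gamma}, Pbc = P_{beta gamma}; the other three
  are their converses (P_{vu} = converse P_{uv}).  We write (i,j) \<in> P_{uv} for i \<lhd>_{uv} j.\<close>

definition Sig :: "nat \<Rightarrow> int set" where
  "Sig N = {1..int N}"

text \<open>Well-formedness of a triangle automaton given by its three relations: the parameters
  are admissible; each P_{uv} consists of letters (i,j) with i \<noteq> j (since
  delta(Id,(i,i)) = Id exactly); delta is a function, so the six sets P_{uv} (the three given
  ones and their converses) are pairwise disjoint.\<close>
definition triangle_aut ::
  "nat \<Rightarrow> int \<Rightarrow> int \<Rightarrow> int \<Rightarrow> (int \<times> int) set \<Rightarrow> (int \<times> int) set \<Rightarrow> (int \<times> int) set \<Rightarrow> bool" where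
  "triangle_aut N a b c Pab Pac Pbc \<longleftrightarrow>
     a \<in> Sig N \<union> {-1,-2,-3} \<and> b \<in> Sig N \<union> {-1,-2,-3} \<and> c \<in> Sig N \<union> {-1,-2,-3} \<and>
     a \<noteq> b \<and> a \<noteq> c \<and> b \<noteq> c \<and>
     (\<forall>P \<in> {Pab, Pac, Pbc}. P \<subseteq> Sig N \<times> Sig N \<and> irrefl P) \<and>
     (let Ps = [Pab, Pac, Pbc, converse Pab, converse Pac, converse Pbc] in
        \<forall>i<6. \<forall>j<6. i \<noteq> j \<longrightarrow> Ps ! i \<inter> Ps ! j = {})"

definition unique_rel :: "(int \<times> int) set \<Rightarrow> bool" where
  "unique_rel P \<longleftrightarrow> (\<forall>i j j'. (i,j) \<in> P \<and> (i,j') \<in> P \<longrightarrow> j = j')"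

definition gasket_aut ::
  "nat \<Rightarrow> int \<Rightarrow> int \<Rightarrow> int \<Rightarrow> (int \<times> int) set \<Rightarrow> (int \<times> int) set \<Rightarrow> (int \<times> int) set \<Rightarrow> bool" where
  "gasket_aut N a b c Pab Pac Pbc \<longleftrightarrow>
     triangle_aut N a b c Pab Pac Pbc \<and>
     \<comment> \<open>Uniqueness, for all six relations P_{uv}\<close>
     (\<forall>P \<in> {Pab, Pac, Pbc, converse Pab, converse Pac, converse Pbc}. unique_rel P) \<and>
     \<comment> \<open>Gathering: any two of a<_{ac} c, a<_{bc} b, b<_{ab} c imply the third\<close>
     (\<forall>x y z. ((x,z) \<in> Pac \<and> (x,y) \<in> Pbc \<longrightarrow> (y,z) \<in> Pab) \<and>
              ((x,z) \<in> Pac \<and> (y,z) \<in> Pab \<longrightarrow> (x,y) \<in> Pbc) \<and>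
              ((x,y) \<in> Pbc \<and> (y,z) \<in> Pab \<longrightarrow> (x,z) \<in> Pac)) \<and>
     \<comment> \<open>Boundary\<close>
     (a \<in> Sig N \<longrightarrow> (\<forall>i. (i,a) \<notin> Pac \<and> (i,a) \<notin> Pab)) \<and>
     (b \<in> Sig N \<longrightarrow> (\<forall>i. (i,b) \<notin> Pbc \<and> (i,b) \<notin> converse Pab)) \<and>
     (c \<in> Sig N \<longrightarrow> (\<forall>i. (i,c) \<notin> converse Pac \<and> (i,c) \<notin> converse Pbc))"

definition isolated_in :: "(int \<times> int) set \<Rightarrow> int \<Rightarrow> bool" where
  "isolated_in P x \<longleftrightarrow> (\<forall>i. (i,x) \<notin> P) \<and> (\<forall>k. (x,k) \<notin> P)"

definition gamma_isolated ::
  "nat \<Rightarrow> int \<Rightarrow> int \<Rightarrow> int \<Rightarrow> (int \<times> int) set \<Rightarrow> (int \<times> int) set \<Rightarrow> (int \<times> int) set \<Rightarrow> bool" where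
  "gamma_isolated N a b c Pab Pac Pbc \<longleftrightarrow>
     a \<in> Sig N \<and> b \<in> Sig N \<and> c \<in> Sig N \<and>
     acyclic (Pac \<union> Pbc) \<and>
     isolated_in Pac c \<and> isolated_in Pbc c \<and> isolated_in Pab c"

definition double_maximal :: "(int \<times> int) set \<Rightarrow> (int \<times> int) set \<Rightarrow> int \<Rightarrow> bool" where
  "double_maximal Pac Pbc x \<longleftrightarrow> (\<forall>k. (x,k) \<notin> Pac) \<and> (\<forall>k. (x,k) \<notin> Pbc)"

text \<open>In the beta-gamma
  case the roles of alpha and beta are interchanged, so the relevant predecessor is a
  beta-alpha-predecessor lambda <_{ba} kappa, i.e. (kappa, lambda) in Pab.\<close>
definition one_step_simp ::
  "(int \<times> int) set \<Rightarrow> (int \<times> int) set \<Rightarrow> (int \<times> int) set \<Rightarrow>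
   (int \<times> int) set \<Rightarrow> (int \<times> int) set \<Rightarrow> (int \<times> int) set \<Rightarrow> bool" where
  "one_step_simp Pab Pac Pbc Pab' Pac' Pbc' \<longleftrightarrow>
     (\<exists>t k. double_maximal Pac Pbc k \<and>
       (((t,k) \<in> Pac \<and>
          (((\<forall>l. (l,k) \<notin> Pab) \<and> Pab' = Pab \<and> Pac' = Pac - {(t,k)} \<and> Pbc' = Pbc) \<or>
           (\<exists>l. (l,k) \<in> Pab \<and> Pab' = Pab \<and> Pac' = Pac - {(t,k)} \<and> Pbc' = Pbc - {(t,l)}))) \<or>
        ((t,k) \<in> Pbc \<and>
          (((\<forall>l. (k,l) \<notin> Pab) \<and> Pab' = Pab \<and> Pbc' = Pbc - {(t,k)} \<and> Pac' = Pac) \<or>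
           (\<exists>l. (k,l) \<in> Pab \<and> Pab' = Pab \<and> Pbc' = Pbc - {(t,k)} \<and> Pac' = Pac - {(t,l)})))))"

end

theory Submission
  imports Defs
begin

text \<open>A one-step simplification keeps \<open>Pab\<close> and only shrinks \<open>Pac\<close> and \<open>Pbc\<close>.  Every
  defining property of a gasket automaton and of the \<open>\<gamma>\<close>-isolated condition except Gathering
  passes to subrelations.  Gathering survives because the removed pairs match: when
  \<open>\<lambda> \<lhd>\<^sub>\<alpha>\<^sub>\<beta> \<kappa>\<close>, Uniqueness of \<open>\<lhd>\<^sub>\<alpha>\<^sub>\<beta>\<close> in both directions makes \<open>\<tau> \<lhd>\<^sub>\<alpha>\<^sub>\<gamma> \<kappa>\<close>, \<open>\<tau> \<lhd>\<^sub>\<beta>\<^sub>\<gamma> \<lambda>\<close>,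
  \<open>\<lambda> \<lhd>\<^sub>\<alpha>\<^sub>\<beta> \<kappa>\<close> the only gathering triangle through either removed pair; when \<kappa> has no
  \<open>\<alpha>\<beta>\<close>-predecessor, no triangle passes through \<open>(\<tau>,\<kappa>)\<close> at all.\<close>

lemma nth_pairwise_disjoint_mono:
  assumes "list_all2 (\<subseteq>) Qs Ps"
    and "\<forall>i<length Ps. \<forall>j<length Ps. i \<noteq> j \<longrightarrow> Ps ! i \<inter> Ps ! j = {}"
  shows "\<forall>i<length Qs. \<forall>j<length Qs. i \<noteq> j \<longrightarrow> Qs ! i \<inter> Qs ! j = {}"
proof (intro allI impI)
  fix i j assume ij: "i < length Qs" "j < length Qs" "i \<noteq> j"
  have "length Qs = length Ps"
    using assms(1) by (rule list_all2_lengthD)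
  then have "Ps ! i \<inter> Ps ! j = {}"
    using assms(2) ij by simp
  moreover have "Qs ! i \<subseteq> Ps ! i" "Qs ! j \<subseteq> Ps ! j"
    using assms(1) ij by (simp_all add: list_all2_nthD)
  ultimately show "Qs ! i \<inter> Qs ! j = {}"
    by blast
qed

lemma triangle_aut_mono:
  assumes tri: "triangle_aut N a b c Pab Pac Pbc"
    and sub: "Pab' \<subseteq> Pab" "Pac' \<subseteq> Pac" "Pbc' \<subseteq> Pbc"
  shows "triangle_aut N a b c Pab' Pac' Pbc'"
proof -
  let ?Ps = "[Pab, Pac, Pbc, converse Pab, converse Pac, converse Pbc]"
  let ?Ps' = "[Pab', Pac', Pbc', converse Pab', converse Pac', converse Pbc']"
  have "\<forall>P \<in> {Pab, Pac, Pbc}. P \<subseteq> Sig N \<times> Sig N \<and> irrefl P"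
    using tri unfolding triangle_aut_def by argo
  then have letters: "\<forall>P \<in> {Pab', Pac', Pbc'}. P \<subseteq> Sig N \<times> Sig N \<and> irrefl P"
    using sub by (auto simp: irrefl_def)
  have "\<forall>i<6. \<forall>j<6. i \<noteq> j \<longrightarrow> ?Ps ! i \<inter> ?Ps ! j = {}"
    using tri unfolding triangle_aut_def Let_def by argo
  moreover have "list_all2 (\<subseteq>) ?Ps' ?Ps"
    using sub by simp
  ultimately have "\<forall>i<6. \<forall>j<6. i \<noteq> j \<longrightarrow> ?Ps' ! i \<inter> ?Ps' ! j = {}"
    using nth_pairwise_disjoint_mono[of ?Ps' ?Ps] by simp
  with tri letters show ?thesis
    unfolding triangle_aut_def Let_def by argo
qed

lemma unique_rel_subset: "unique_rel P \<Longrightarrow> Q \<subseteq> P \<Longrightarrow> unique_rel Q"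
  unfolding unique_rel_def by blast

lemma isolated_in_subset: "isolated_in P x \<Longrightarrow> Q \<subseteq> P \<Longrightarrow> isolated_in Q x"
  unfolding isolated_in_def by blast

lemma gamma_isolated_mono:
  assumes "gamma_isolated N a b c Pab Pac Pbc"
    and "Pab' \<subseteq> Pab" "Pac' \<subseteq> Pac" "Pbc' \<subseteq> Pbc"
  shows "gamma_isolated N a b c Pab' Pac' Pbc'"
  using assms unfolding gamma_isolated_def
  by (meson Un_mono acyclic_subset isolated_in_subset)

definition gathering :: "(int \<times> int) set \<Rightarrow> (int \<times> int) set \<Rightarrow> (int \<times> int) set \<Rightarrow> bool" where
  "gathering Pab Pac Pbc \<longleftrightarrow>
     (\<forall>x y z. ((x,z) \<in> Pac \<and> (x,y) \<in> Pbc \<longrightarrow> (y,z) \<in> Pab) \<and>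
              ((x,z) \<in> Pac \<and> (y,z) \<in> Pab \<longrightarrow> (x,y) \<in> Pbc) \<and>
              ((x,y) \<in> Pbc \<and> (y,z) \<in> Pab \<longrightarrow> (x,z) \<in> Pac))"

lemma gasket_aut_iff:
  "gasket_aut N a b c Pab Pac Pbc \<longleftrightarrow>
     triangle_aut N a b c Pab Pac Pbc \<and>
     (\<forall>P \<in> {Pab, Pac, Pbc, converse Pab, converse Pac, converse Pbc}. unique_rel P) \<and>
     gathering Pab Pac Pbc \<and>
     (a \<in> Sig N \<longrightarrow> (\<forall>i. (i,a) \<notin> Pac \<and> (i,a) \<notin> Pab)) \<and>
     (b \<in> Sig N \<longrightarrow> (\<forall>i. (i,b) \<notin> Pbc \<and> (i,b) \<notin> converse Pab)) \<and>
     (c \<in> Sig N \<longrightarrow> (\<forall>i. (i,c) \<notin> converse Pac \<and> (i,c) \<notin> converse Pbc))"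
  unfolding gasket_aut_def gathering_def ..

lemma gasket_aut_mono:
  assumes gasket: "gasket_aut N a b c Pab Pac Pbc"
    and sub: "Pab' \<subseteq> Pab" "Pac' \<subseteq> Pac" "Pbc' \<subseteq> Pbc"
    and "gathering Pab' Pac' Pbc'"
  shows "gasket_aut N a b c Pab' Pac' Pbc'"
  unfolding gasket_aut_iff
proof (intro conjI)
  show "triangle_aut N a b c Pab' Pac' Pbc'"
    using gasket sub unfolding gasket_aut_iff by (blast intro: triangle_aut_mono)
  have "unique_rel Pab" "unique_rel Pac" "unique_rel Pbc"
    "unique_rel (converse Pab)" "unique_rel (converse Pac)" "unique_rel (converse Pbc)"
    using gasket unfolding gasket_aut_iff by simp_all
  then show "\<forall>P \<in> {Pab', Pac', Pbc', converse Pab', converse Pac', converse Pbc'}. unique_rel P"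
    using sub unique_rel_subset[of Pab Pab'] unique_rel_subset[of Pac Pac']
      unique_rel_subset[of Pbc Pbc'] unique_rel_subset[of "converse Pab" "converse Pab'"]
      unique_rel_subset[of "converse Pac" "converse Pac'"]
      unique_rel_subset[of "converse Pbc" "converse Pbc'"]
    by simp
qed (use assms in \<open>unfold gasket_aut_iff, blast+\<close>)

lemma gathering_swap: "gathering (converse Pab) Pbc Pac \<longleftrightarrow> gathering Pab Pac Pbc"
  unfolding gathering_def by auto

lemma gathering_Diff_no_predecessor:
  assumes "gathering Pab Pac Pbc" and "\<forall>l. (l,k) \<notin> Pab"
  shows "gathering Pab (Pac - {(t,k)}) Pbc"
  using assms unfolding gathering_def by blast

lemma gathering_Diff_predecessor:
  assumes gath: "gathering Pab Pac Pbc"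
    and uniq: "unique_rel Pab" "unique_rel (converse Pab)"
    and "(l,k) \<in> Pab"
  shows "gathering Pab (Pac - {(t,k)}) (Pbc - {(t,l)})"
proof -
  have "(x,y) \<in> Pbc - {(t,l)}" if "(x,z) \<in> Pac - {(t,k)}" "(y,z) \<in> Pab" for x y z
  proof -
    have "(x,y) \<noteq> (t,l)"
      using that \<open>(l,k) \<in> Pab\<close> uniq(1) unfolding unique_rel_def by blast
    then show ?thesis
      using that gath unfolding gathering_def by blast
  qed
  moreover have "(x,z) \<in> Pac - {(t,k)}" if "(x,y) \<in> Pbc - {(t,l)}" "(y,z) \<in> Pab" for x y z
  proof -
    have "(x,z) \<noteq> (t,k)"
      using that \<open>(l,k) \<in> Pab\<close> uniq(2) unfolding unique_rel_def by blast
    then show ?thesis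
      using that gath unfolding gathering_def by blast
  qed
  ultimately show ?thesis
    using gath unfolding gathering_def by blast
qed

lemma one_step_simp_subset_gathering:
  assumes "one_step_simp Pab Pac Pbc Pab' Pac' Pbc'"
    and gath: "gathering Pab Pac Pbc"
    and uniq: "unique_rel Pab" "unique_rel (converse Pab)"
  shows "Pab' = Pab \<and> Pac' \<subseteq> Pac \<and> Pbc' \<subseteq> Pbc \<and> gathering Pab' Pac' Pbc'"
proof -
  have gath_swapped: "gathering (converse Pab) Pbc Pac"
    using gath by (simp add: gathering_swap)
  from assms(1) consider
      (ac) t k where "\<forall>l. (l,k) \<notin> Pab"
        "Pab' = Pab" "Pac' = Pac - {(t,k)}" "Pbc' = Pbc"
    | (ac_predecessor) t k l where "(l,k) \<in> Pab"
        "Pab' = Pab" "Pac' = Pac - {(t,k)}" "Pbc' = Pbc - {(t,l)}"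
    | (bc) t k where "\<forall>l. (l,k) \<notin> converse Pab"
        "Pab' = Pab" "Pbc' = Pbc - {(t,k)}" "Pac' = Pac"
    | (bc_predecessor) t k l where "(l,k) \<in> converse Pab"
        "Pab' = Pab" "Pbc' = Pbc - {(t,k)}" "Pac' = Pac - {(t,l)}"
    unfolding one_step_simp_def by auto
  then show ?thesis
  proof cases
    case ac
    then show ?thesis
      using gathering_Diff_no_predecessor[OF gath] by auto
  next
    case ac_predecessor
    then show ?thesis
      using gathering_Diff_predecessor[OF gath uniq] by auto
  next
    case bc
    then show ?thesis
      using gathering_Diff_no_predecessor[OF gath_swapped] by (auto simp: gathering_swap)
  next
    case bc_predecessor
    then show ?thesis
      using gathering_Diff_predecessor[OF gath_swapped uniq(2)] uniq(1)
      by (auto simp: gathering_swap)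
  qed
qed

theorem lemma5p3:
  fixes N :: nat and a b c :: int and Pab Pac Pbc Pab' Pac' Pbc' :: "(int \<times> int) set"
  assumes "gasket_aut N a b c Pab Pac Pbc"
    and "gamma_isolated N a b c Pab Pac Pbc"
    and "Pac \<union> Pbc \<noteq> {}"
    and "one_step_simp Pab Pac Pbc Pab' Pac' Pbc'"
  shows "gasket_aut N a b c Pab' Pac' Pbc' \<and> gamma_isolated N a b c Pab' Pac' Pbc'"
proof -
  have "gathering Pab Pac Pbc" "unique_rel Pab" "unique_rel (converse Pab)"
    using assms(1) unfolding gasket_aut_iff by simp_all
  from one_step_simp_subset_gathering[OF assms(4) this]
  have sub: "Pab' \<subseteq> Pab" "Pac' \<subseteq> Pac" "Pbc' \<subseteq> Pbc" and gath: "gathering Pab' Pac' Pbc'"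
    by blast+
  show ?thesis
    using gasket_aut_mono[OF assms(1) sub gath] gamma_isolated_mono[OF assms(2) sub] ..
qed

end
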